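(* Under the hypotheses of Lemma 2.2, let $\varphi(U)=\phi(U)-\phi(I)U+[T,U]$ with $T=P_1\phi(P_1)P_2+P_2\phi(P_2)P_1$. Then for all $U_{ij},V_{ij}\in\mathcal{U}_{ij}$ ($i,j=1,2$): (1) $\varphi(U_{11}\circ V_{12})=\varphi(U_{11})\circ V_{12}+U_{11}\circ\varphi(V_{12})$; (2) $\varphi(U_{22}\circ V_{21})=\varphi(U_{22})\circ V_{21}+U_{22}\circ\varphi(V_{21})$; (3) $\varphi(U_{11}\circ V_{21})=\varphi(U_{11})\circ V_{21}+U_{11}\circ\varphi(V_{21})$; (4) $\varphi(U_{22}\circ V_{12})=\varphi(U_{22})\circ V_{12}+U_{22}\circ\varphi(V_{12})$; (5) $\varphi(U_{11}\circ V_{11})=\varphi(U_{11})\circ V_{11}+U_{11}\circ\varphi(V_{11})$; (6) $\varphi(U_{22}\circ V_{22})=\varphi(U_{22})\circ V_{22}+U_{22}\circ\varphi(V_{22})$; (7) $\varphi(U_{12}\circ V_{21})=\varphi(U_{12})\circ V_{21}+U_{12}\circ\varphi(V_{21})$; (8) $\varphi(U_{21}\circ V_{12})=\varphi(U_{21})\circ V_{12}+U_{21}\circ\varphi(V_{12})$.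
   Context: $\mathcal{U}=\begin{pmatrix}\mathcal{A}&\mathcal{M}\\ \mathcal{N}&\mathcal{B}\end{pmatrix}$ is a generalized matrix ring: $\mathcal{A},\mathcal{B}$ unital 2-torsion free rings, $\mathcal{M}$ a unital $(\mathcal{A},\mathcal{B})$-bimodule faithful on both sides (if $A\mathcal{M}=\{0\}$ then $A=0$; if $\mathcal{M}B=\{0\}$ then $B=0$), $\mathcal{N}$ a unital $(\mathcal{B},\mathcal{A})$-bimodule, with bimodule pairings $MN\in\mathcal{A}$, $NM\in\mathcal{B}$ satisfying $(MN)M'=M(NM')$, $(NM)N'=N(MN')$; $\mathcal{U}$ consists of $2\times2$ matrices with usual matrix operations and identity $I$. The hypotheses of Lemma 2.2: $\phi:\mathcal{U}\to\mathcal{U}$ is additive and $\phi(U)\circ V+U\circ\phi(V)=0$ whenever $UV=VU=0$. $X\circ Y=XY+YX$, $[X,Y]=XY-YX$. $P_1=\mathrm{diag}(I_{\mathcal{A}},0)$, $P_2=\mathrm{diag}(0,I_{\mathcal{B}})$, and $\mathcal{U}_{ij}=P_i\mathcal{U}P_j$. *)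

theory Defs
  imports Main
begin

text \<open>Elements of the generalized matrix ring U = [[A, M], [N, B]] as 2x2 arrays.\<close>
datatype ('a, 'm, 'n, 'b) gm = GM (g11: 'a) (g12: 'm) (g21: 'n) (g22: 'b)

instantiation gm :: (ab_group_add, ab_group_add, ab_group_add, ab_group_add) ab_group_add
begin
definition zero_gm_def: "0 = GM 0 0 0 0"
definition plus_gm_def: "X + Y = GM (g11 X + g11 Y) (g12 X + g12 Y) (g21 X + g21 Y) (g22 X + g22 Y)"
definition uminus_gm_def: "- X = GM (- g11 X) (- g12 X) (- g21 X) (- g22 X)"
definition minus_gm_def: "X - Y = GM (g11 X - g11 Y) (g12 X - g12 Y) (g21 X - g21 Y) (g22 X - g22 Y)"
instance
  by standard (simp_all add: zero_gm_def plus_gm_def uminus_gm_def minus_gm_def algebra_simps)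
end

record ('a, 'b, 'm, 'n) gmr_ops =
  lA  :: "'a \<Rightarrow> 'm \<Rightarrow> 'm"
  rB  :: "'m \<Rightarrow> 'b \<Rightarrow> 'm"
  lB  :: "'b \<Rightarrow> 'n \<Rightarrow> 'n"
  rA  :: "'n \<Rightarrow> 'a \<Rightarrow> 'n"
  pMN :: "'m \<Rightarrow> 'n \<Rightarrow> 'a"
  pNM :: "'n \<Rightarrow> 'm \<Rightarrow> 'b"

definition gen_matrix_ring :: "('a::ring_1, 'b::ring_1, 'm::ab_group_add, 'n::ab_group_add) gmr_ops \<Rightarrow> bool" where
  "gen_matrix_ring G \<longleftrightarrow>
    (\<forall>a a' m. lA G (a + a') m = lA G a m + lA G a' m) \<and>
    (\<forall>a m m'. lA G a (m + m') = lA G a m + lA G a m') \<and>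
    (\<forall>a a' m. lA G (a * a') m = lA G a (lA G a' m)) \<and>
    (\<forall>m. lA G 1 m = m) \<and>
    (\<forall>m b b'. rB G m (b + b') = rB G m b + rB G m b') \<and>
    (\<forall>m m' b. rB G (m + m') b = rB G m b + rB G m' b) \<and>
    (\<forall>m b b'. rB G m (b * b') = rB G (rB G m b) b') \<and>
    (\<forall>m. rB G m 1 = m) \<and>
    (\<forall>a m b. lA G a (rB G m b) = rB G (lA G a m) b) \<and>
    (\<forall>b b' n. lB G (b + b') n = lB G b n + lB G b' n) \<and>
    (\<forall>b n n'. lB G b (n + n') = lB G b n + lB G b n') \<and>
    (\<forall>b b' n. lB G (b * b') n = lB G b (lB G b' n)) \<and>
    (\<forall>n. lB G 1 n = n) \<and>
    (\<forall>n a a'. rA G n (a + a') = rA G n a + rA G n a') \<and>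
    (\<forall>n n' a. rA G (n + n') a = rA G n a + rA G n' a) \<and>
    (\<forall>n a a'. rA G n (a * a') = rA G (rA G n a) a') \<and>
    (\<forall>n. rA G n 1 = n) \<and>
    (\<forall>b n a. lB G b (rA G n a) = rA G (lB G b n) a) \<and>
    (\<forall>m m' n. pMN G (m + m') n = pMN G m n + pMN G m' n) \<and>
    (\<forall>m n n'. pMN G m (n + n') = pMN G m n + pMN G m n') \<and>
    (\<forall>a m n. pMN G (lA G a m) n = a * pMN G m n) \<and>
    (\<forall>m n a. pMN G m (rA G n a) = pMN G m n * a) \<and>
    (\<forall>m b n. pMN G (rB G m b) n = pMN G m (lB G b n)) \<and>
    (\<forall>n n' m. pNM G (n + n') m = pNM G n m + pNM G n' m) \<and>
    (\<forall>n m m'. pNM G n (m + m') = pNM G n m + pNM G n m') \<and>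
    (\<forall>b n m. pNM G (lB G b n) m = b * pNM G n m) \<and>
    (\<forall>n m b. pNM G n (rB G m b) = pNM G n m * b) \<and>
    (\<forall>n a m. pNM G (rA G n a) m = pNM G n (lA G a m)) \<and>
    (\<forall>m n m'. lA G (pMN G m n) m' = rB G m (pNM G n m')) \<and>
    (\<forall>n m n'. lB G (pNM G n m) n' = rA G n (pMN G m n'))"

definition faithful_M :: "('a::ring_1, 'b::ring_1, 'm::ab_group_add, 'n::ab_group_add) gmr_ops \<Rightarrow> bool" where
  "faithful_M G \<longleftrightarrow>
    (\<forall>a. (\<forall>m. lA G a m = 0) \<longrightarrow> a = 0) \<and>
    (\<forall>b. (\<forall>m. rB G m b = 0) \<longrightarrow> b = 0)"

definition two_torsion_free :: "'a::ab_group_add itself \<Rightarrow> bool" where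
  "two_torsion_free _ \<longleftrightarrow> (\<forall>x::'a. x + x = 0 \<longrightarrow> x = 0)"

definition gmul :: "('a::ring_1, 'b::ring_1, 'm::ab_group_add, 'n::ab_group_add) gmr_ops
    \<Rightarrow> ('a, 'm, 'n, 'b) gm \<Rightarrow> ('a, 'm, 'n, 'b) gm \<Rightarrow> ('a, 'm, 'n, 'b) gm" where
  "gmul G X Y = GM
     (g11 X * g11 Y + pMN G (g12 X) (g21 Y))
     (lA G (g11 X) (g12 Y) + rB G (g12 X) (g22 Y))
     (rA G (g21 X) (g11 Y) + lB G (g22 X) (g21 Y))
     (pNM G (g21 X) (g12 Y) + g22 X * g22 Y)"

definition gI :: "('a::ring_1, 'm::ab_group_add, 'n::ab_group_add, 'b::ring_1) gm" where
  "gI = GM 1 0 0 1"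
definition gP1 :: "('a::ring_1, 'm::ab_group_add, 'n::ab_group_add, 'b::ring_1) gm" where
  "gP1 = GM 1 0 0 0"
definition gP2 :: "('a::ring_1, 'm::ab_group_add, 'n::ab_group_add, 'b::ring_1) gm" where
  "gP2 = GM 0 0 0 1"

definition jprod where "jprod G X Y = gmul G X Y + gmul G Y X"
definition gcomm where "gcomm G X Y = gmul G X Y - gmul G Y X"

definition corner where "corner G P Q = {gmul G (gmul G P X) Q | X. True}"

end

theory Submission
  imports Defs HOL.Modules
begin

text \<open>Testing the zero-product hypothesis on orthogonal pairs built from the four Peirce blocks
  determines \<open>\<phi>\<close> blockwise: \<open>\<phi>(I) = diag(cA, cB)\<close> with \<open>cA, cB\<close> central, the off-diagonal
  parts of \<open>\<phi>\<close> on \<open>A\<close> and \<open>B\<close> are those of \<open>T = [[0, m0], [n0, 0]]\<close>, and the corrected map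
  \<open>\<phi>' U = \<phi> U - \<phi>(I) U + [T, U]\<close> acts on each block as a derivation (of \<open>A\<close>, of \<open>B\<close>, of the
  bimodules \<open>M\<close>, \<open>N\<close>), apart from parts \<open>M \<rightarrow> N\<close>, \<open>N \<rightarrow> M\<close> that are module maps. Since \<open>\<phi>(I)\<close> is
  central and \<open>[T, -]\<close> is an inner derivation, \<open>\<phi>'\<close> again satisfies the zero-product hypothesis,
  which yields the compatibility of these derivations with the pairings. Each of the eight
  identities is then a componentwise consequence.\<close>

lemma gm_eq_iff:
  "X = Y \<longleftrightarrow> g11 X = g11 Y \<and> g12 X = g12 Y \<and> g21 X = g21 Y \<and> g22 X = g22 Y"
  by (cases X; cases Y) auto

lemma GM_add: "GM a m n b + GM a' m' n' b' = GM (a + a') (m + m') (n + n') (b + b')"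
  by (simp add: plus_gm_def)

lemma gm_sel_simps[simp]:
  "g11 (X + Y) = g11 X + g11 Y" "g12 (X + Y) = g12 X + g12 Y"
  "g21 (X + Y) = g21 X + g21 Y" "g22 (X + Y) = g22 X + g22 Y"
  "g11 (X - Y) = g11 X - g11 Y" "g12 (X - Y) = g12 X - g12 Y"
  "g21 (X - Y) = g21 X - g21 Y" "g22 (X - Y) = g22 X - g22 Y"
  "g11 (- X) = - g11 X" "g12 (- X) = - g12 X" "g21 (- X) = - g21 X" "g22 (- X) = - g22 X"
  "g11 0 = 0" "g12 0 = 0" "g21 0 = 0" "g22 0 = 0"
  by (simp_all add: plus_gm_def minus_gm_def uminus_gm_def zero_gm_def)

definition jordan_derivation_at ::
    "('a::ring_1, 'b::ring_1, 'm::ab_group_add, 'n::ab_group_add) gmr_ops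
     \<Rightarrow> (('a, 'm, 'n, 'b) gm \<Rightarrow> ('a, 'm, 'n, 'b) gm)
     \<Rightarrow> ('a, 'm, 'n, 'b) gm \<Rightarrow> ('a, 'm, 'n, 'b) gm \<Rightarrow> bool"
  where "jordan_derivation_at G f U V \<longleftrightarrow>
    f (jprod G U V) = jprod G (f U) V + jprod G U (f V)"

locale generalized_matrix_ring =
  fixes G :: "('a::ring_1, 'b::ring_1, 'm::ab_group_add, 'n::ab_group_add) gmr_ops"
  assumes gen_matrix_ring: "gen_matrix_ring G"
begin

lemma gmr_axioms[simp]:
  "lA G (a + a') m = lA G a m + lA G a' m"
  "lA G a (m + m') = lA G a m + lA G a m'"
  "lA G (a * a') m = lA G a (lA G a' m)"
  "lA G 1 m = m"
  "rB G m (b + b') = rB G m b + rB G m b'"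
  "rB G (m + m') b = rB G m b + rB G m' b"
  "rB G m (b * b') = rB G (rB G m b) b'"
  "rB G m 1 = m"
  "lA G a (rB G m b) = rB G (lA G a m) b"
  "lB G (b + b') n = lB G b n + lB G b' n"
  "lB G b (n + n') = lB G b n + lB G b n'"
  "lB G (b * b') n = lB G b (lB G b' n)"
  "lB G 1 n = n"
  "rA G n (a + a') = rA G n a + rA G n a'"
  "rA G (n + n') a = rA G n a + rA G n' a"
  "rA G n (a * a') = rA G (rA G n a) a'"
  "rA G n 1 = n"
  "lB G b (rA G n a) = rA G (lB G b n) a"
  "pMN G (m + m') n = pMN G m n + pMN G m' n"
  "pMN G m (n + n') = pMN G m n + pMN G m n'"
  "pMN G (lA G a m) n = a * pMN G m n"
  "pMN G m (rA G n a) = pMN G m n * a"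
  "pMN G (rB G m b) n = pMN G m (lB G b n)"
  "pNM G (n + n') m = pNM G n m + pNM G n' m"
  "pNM G n (m + m') = pNM G n m + pNM G n m'"
  "pNM G (lB G b n) m = b * pNM G n m"
  "pNM G n (rB G m b) = pNM G n m * b"
  "pNM G (rA G n a) m = pNM G n (lA G a m)"
  "lA G (pMN G m n) m' = rB G m (pNM G n m')"
  "lB G (pNM G n m) n' = rA G n (pMN G m n')"
  using gen_matrix_ring by (simp_all add: gen_matrix_ring_def)

lemma additive_actions:
  "additive (lA G a)" "additive (\<lambda>a. lA G a m)"
  "additive (rB G m)" "additive (\<lambda>m. rB G m b)"
  "additive (lB G b)" "additive (\<lambda>b. lB G b n)"
  "additive (rA G n)" "additive (\<lambda>n. rA G n a)"
  "additive (pMN G m)" "additive (\<lambda>m. pMN G m n)"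
  "additive (pNM G n)" "additive (\<lambda>n. pNM G n m)"
  by (simp_all add: additive_def)

lemmas actions_zero[simp] = additive_actions[THEN additive.zero]
lemmas actions_minus[simp] = additive_actions[THEN additive.minus]
lemmas actions_diff[simp] = additive_actions[THEN additive.diff]

lemma gmul_assoc: "gmul G (gmul G X Y) Z = gmul G X (gmul G Y Z)"
  by (simp add: gm_eq_iff gmul_def distrib_left distrib_right mult.assoc add_ac)

lemma gmul_distribs:
  "gmul G (X + Y) Z = gmul G X Z + gmul G Y Z"
  "gmul G X (Y + Z) = gmul G X Y + gmul G X Z"
  "gmul G (X - Y) Z = gmul G X Z - gmul G Y Z"
  "gmul G X (Y - Z) = gmul G X Y - gmul G X Z"
  "gmul G 0 X = 0" "gmul G X 0 = 0"
  by (simp_all add: gm_eq_iff gmul_def algebra_simps)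

lemma jprod_distribs:
  "jprod G (X + Y) Z = jprod G X Z + jprod G Y Z"
  "jprod G X (Y + Z) = jprod G X Y + jprod G X Z"
  "jprod G (X - Y) Z = jprod G X Z - jprod G Y Z"
  "jprod G X (Y - Z) = jprod G X Y - jprod G X Z"
  by (simp_all add: jprod_def gmul_distribs algebra_simps)

lemma corner_blocks:
  "corner G gP1 gP1 = range (\<lambda>a. GM a 0 0 0)"
  "corner G gP1 gP2 = range (\<lambda>m. GM 0 m 0 0)"
  "corner G gP2 gP1 = range (\<lambda>n. GM 0 0 n 0)"
  "corner G gP2 gP2 = range (\<lambda>b. GM 0 0 0 b)"
  by (auto simp: corner_def gP1_def gP2_def gmul_def image_iff intro: exI[of _ "GM _ _ _ _"])

end

locale zero_product_jordan_map = generalized_matrix_ring G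
  for G :: "('a::ring_1, 'b::ring_1, 'm::ab_group_add, 'n::ab_group_add) gmr_ops" +
  fixes phi :: "('a, 'm, 'n, 'b) gm \<Rightarrow> ('a, 'm, 'n, 'b) gm"
  assumes faithful_left: "(\<And>m. lA G a m = 0) \<Longrightarrow> a = 0"
    and faithful_right: "(\<And>m. rB G m b = 0) \<Longrightarrow> b = 0"
    and two_torsion_free_A: "x + x = (0::'a) \<Longrightarrow> x = 0"
    and two_torsion_free_B: "y + y = (0::'b) \<Longrightarrow> y = 0"
    and additive_phi: "additive phi"
    and zero_product: "gmul G U V = 0 \<Longrightarrow> gmul G V U = 0 \<Longrightarrow>
                         jprod G (phi U) V + jprod G U (phi V) = 0"
begin

definition T_phi :: "('a, 'm, 'n, 'b) gm" where
  "T_phi = gmul G (gmul G gP1 (phi gP1)) gP2 + gmul G (gmul G gP2 (phi gP2)) gP1"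

definition varphi :: "('a, 'm, 'n, 'b) gm \<Rightarrow> ('a, 'm, 'n, 'b) gm" where
  "varphi U = phi U - gmul G (phi gI) U + gcomm G T_phi U"

lemmas phi_add = additive.add[OF additive_phi]
lemmas phi_diff = additive.diff[OF additive_phi]

lemma double_inj_A: "x + x = y + y \<Longrightarrow> x = (y::'a)"
  using two_torsion_free_A[of "x - y"] by (simp add: algebra_simps)

lemma double_inj_B: "x + x = y + y \<Longrightarrow> x = (y::'b)"
  using two_torsion_free_B[of "x - y"] by (simp add: algebra_simps)

lemma zero_product_eq:
  "gmul G U V = 0 \<Longrightarrow> gmul G V U = 0 \<Longrightarrow> jprod G (phi U) V = - jprod G U (phi V)"
  using zero_product by (simp add: eq_neg_iff_add_eq_0)

lemma phi_orth_AB: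
  "jprod G (phi (GM a 0 0 0)) (GM 0 0 0 b) = - jprod G (GM a 0 0 0) (phi (GM 0 0 0 b))"
  by (rule zero_product_eq) (simp_all add: gmul_def zero_gm_def)

lemma phi_orth_MM:
  "jprod G (phi (GM 0 x 0 0)) (GM 0 y 0 0) = - jprod G (GM 0 x 0 0) (phi (GM 0 y 0 0))"
  by (rule zero_product_eq) (simp_all add: gmul_def zero_gm_def)

lemma phi_orth_NN:
  "jprod G (phi (GM 0 0 x 0)) (GM 0 0 y 0) = - jprod G (GM 0 0 x 0) (phi (GM 0 0 y 0))"
  by (rule zero_product_eq) (simp_all add: gmul_def zero_gm_def)

lemma phi_orth_BA:
  "jprod G (phi (GM 0 0 0 b)) (GM a 0 0 0) = - jprod G (GM 0 0 0 b) (phi (GM a 0 0 0))"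
  by (rule zero_product_eq) (simp_all add: gmul_def zero_gm_def)

definition cA :: 'a where "cA = g11 (phi (GM 1 0 0 0))"
definition cB :: 'b where "cB = g22 (phi (GM 0 0 0 1))"
definition m0 :: 'm where "m0 = g12 (phi (GM 1 0 0 0))"
definition n0 :: 'n where "n0 = g21 (phi (GM 0 0 0 1))"

lemma phi_orth_AB_components:
  "a * g11 (phi (GM 0 0 0 b)) + g11 (phi (GM 0 0 0 b)) * a = 0"
  "g22 (phi (GM a 0 0 0)) * b + b * g22 (phi (GM a 0 0 0)) = 0"
  "rB G (g12 (phi (GM a 0 0 0))) b + lA G a (g12 (phi (GM 0 0 0 b))) = 0"
  "lB G b (g21 (phi (GM a 0 0 0))) + rA G (g21 (phi (GM 0 0 0 b))) a = 0"
  using phi_orth_AB[of a b, THEN arg_cong, of g11] phi_orth_AB[of a b, THEN arg_cong, of g22]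
    phi_orth_AB[of a b, THEN arg_cong, of g12] phi_orth_AB[of a b, THEN arg_cong, of g21]
  by (simp_all add: jprod_def gmul_def eq_neg_iff_add_eq_0 neg_eq_iff_add_eq_0)

lemma g11_phi_B[simp]: "g11 (phi (GM 0 0 0 b)) = 0"
  by (rule two_torsion_free_A) (use phi_orth_AB_components(1)[of 1 b] in simp)

lemma g22_phi_A[simp]: "g22 (phi (GM a 0 0 0)) = 0"
  by (rule two_torsion_free_B) (use phi_orth_AB_components(2)[of a 1] in simp)

lemma g12_phi_A[simp]: "g12 (phi (GM a 0 0 0)) = lA G a m0"
proof -
  have "g12 (phi (GM 0 0 0 1)) = - m0"
    using phi_orth_AB_components(3)[of 1 1] by (simp add: m0_def eq_neg_iff_add_eq_0 add.commute)
  then show ?thesis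
    using phi_orth_AB_components(3)[of a 1] by (simp add: add_eq_0_iff2)
qed

lemma g12_phi_B[simp]: "g12 (phi (GM 0 0 0 b)) = - rB G m0 b"
  using phi_orth_AB_components(3)[of 1 b] by (simp add: eq_neg_iff_add_eq_0 add.commute)

lemma g21_phi_A[simp]: "g21 (phi (GM a 0 0 0)) = - rA G n0 a"
  using phi_orth_AB_components(4)[of 1 a] by (simp add: n0_def eq_neg_iff_add_eq_0)

lemma g21_phi_B[simp]: "g21 (phi (GM 0 0 0 b)) = lB G b n0"
proof -
  have "g21 (phi (GM 1 0 0 0)) = - n0"
    using phi_orth_AB_components(4)[of 1 1] by (simp add: n0_def eq_neg_iff_add_eq_0)
  then show ?thesis
    using phi_orth_AB_components(4)[of b 1] by (simp add: eq_neg_iff_add_eq_0 add.commute)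
qed

lemma phi_balanced_M:
  "jprod G (phi (GM a 0 0 0)) (GM 0 (rB G m b) 0 0)
     + jprod G (GM a 0 0 0) (phi (GM 0 (rB G m b) 0 0))
   = jprod G (phi (GM 0 (lA G a m) 0 0)) (GM 0 0 0 b)
     + jprod G (GM 0 (lA G a m) 0 0) (phi (GM 0 0 0 b))"
proof -
  let ?U = "GM a 0 0 0 + GM 0 (lA G a m) 0 0" and ?V = "GM 0 (rB G m b) 0 0 - GM 0 0 0 b"
  have "jprod G (phi ?U) ?V = - jprod G ?U (phi ?V)"
    by (rule zero_product_eq) (simp_all add: gm_eq_iff gmul_def)
  then show ?thesis
    by (simp add: phi_add phi_diff jprod_distribs phi_orth_AB phi_orth_MM algebra_simps)
qed

lemma phi_balanced_N:
  "jprod G (phi (GM 0 0 0 b)) (GM 0 0 (rA G n a) 0)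
     + jprod G (GM 0 0 0 b) (phi (GM 0 0 (rA G n a) 0))
   = jprod G (phi (GM 0 0 (lB G b n) 0)) (GM a 0 0 0)
     + jprod G (GM 0 0 (lB G b n) 0) (phi (GM a 0 0 0))"
proof -
  let ?U = "GM 0 0 0 b + GM 0 0 (lB G b n) 0" and ?V = "GM 0 0 (rA G n a) 0 - GM a 0 0 0"
  have "jprod G (phi ?U) ?V = - jprod G ?U (phi ?V)"
    by (rule zero_product_eq) (simp_all add: gm_eq_iff gmul_def)
  then show ?thesis
    by (simp add: phi_add phi_diff jprod_distribs phi_orth_BA phi_orth_NN algebra_simps)
qed

lemma g11_phi_M[simp]: "g11 (phi (GM 0 m 0 0)) = pMN G m n0"
  by (rule double_inj_A)
    (use phi_balanced_M[of 1 m 1, THEN arg_cong, of g11] in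
      \<open>simp add: jprod_def gmul_def algebra_simps\<close>)

lemma g22_phi_M[simp]: "g22 (phi (GM 0 m 0 0)) = - pNM G n0 m"
proof -
  have "g22 (phi (GM 0 m 0 0)) + pNM G n0 m = 0"
    by (rule two_torsion_free_B)
      (use phi_balanced_M[of 1 m 1, THEN arg_cong, of g22] in
        \<open>simp add: jprod_def gmul_def algebra_simps neg_eq_iff_add_eq_0\<close>)
  then show ?thesis by (simp add: eq_neg_iff_add_eq_0)
qed

lemma g11_phi_N[simp]: "g11 (phi (GM 0 0 n 0)) = - pMN G m0 n"
proof -
  have "g11 (phi (GM 0 0 n 0)) + pMN G m0 n = 0"
    by (rule two_torsion_free_A)
      (use phi_balanced_N[of 1 n 1, THEN arg_cong, of g11] in
        \<open>simp add: jprod_def gmul_def algebra_simps neg_eq_iff_add_eq_0\<close>)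
  then show ?thesis by (simp add: eq_neg_iff_add_eq_0)
qed

lemma g22_phi_N[simp]: "g22 (phi (GM 0 0 n 0)) = pNM G n m0"
  by (rule double_inj_B)
    (use phi_balanced_N[of 1 n 1, THEN arg_cong, of g22] in
      \<open>simp add: jprod_def gmul_def algebra_simps\<close>)

lemma cA_cB_intertwine_M: "lA G cA m = rB G m cB"
  using phi_balanced_M[of 1 m 1, THEN arg_cong, of g12]
  by (simp add: jprod_def gmul_def cA_def cB_def)

lemma cA_cB_intertwine_N: "rA G n cA = lB G cB n"
  using phi_balanced_N[of 1 n 1, THEN arg_cong, of g21]
  by (simp add: jprod_def gmul_def cA_def cB_def)

lemma cA_central: "cA * a = a * cA"
proof -
  have "cA * a - a * cA = 0"
    by (rule faithful_left) (simp add: cA_cB_intertwine_M)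
  then show ?thesis by simp
qed

lemma cB_central: "cB * b = b * cB"
proof -
  have "cB * b - b * cB = 0"
    by (rule faithful_right) (simp add: cA_cB_intertwine_M[symmetric])
  then show ?thesis by simp
qed

lemma lB_cB_commute: "lB G b (lB G cB n) = lB G cB (lB G b n)"
  by (simp add: cB_central flip: gmr_axioms(12))

definition dA :: "'a \<Rightarrow> 'a" where "dA a = g11 (phi (GM a 0 0 0)) - cA * a"
definition dB :: "'b \<Rightarrow> 'b" where "dB b = g22 (phi (GM 0 0 0 b)) - cB * b"
definition dM :: "'m \<Rightarrow> 'm" where "dM m = g12 (phi (GM 0 m 0 0)) - lA G cA m"
definition dN :: "'n \<Rightarrow> 'n" where "dN n = g21 (phi (GM 0 0 n 0)) - lB G cB n"
definition flipM :: "'m \<Rightarrow> 'n" where "flipM m = g21 (phi (GM 0 m 0 0))"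
definition flipN :: "'n \<Rightarrow> 'm" where "flipN n = g12 (phi (GM 0 0 n 0))"

lemmas phi_parts_simps = dA_def dB_def dM_def dN_def flipM_def flipN_def
  cA_def[symmetric] cB_def[symmetric] cA_cB_intertwine_M cA_cB_intertwine_N

lemma dM_lA: "dM (lA G a m) = lA G (dA a) m + lA G a (dM m)"
  using phi_balanced_M[of a m 1, THEN arg_cong, of g12]
  by (simp add: jprod_def gmul_def phi_parts_simps algebra_simps)

lemma flipM_lA: "flipM (lA G a m) = rA G (flipM m) a"
  using phi_balanced_M[of a m 1, THEN arg_cong, of g21]
  by (simp add: jprod_def gmul_def phi_parts_simps algebra_simps)

lemma dM_rB: "dM (rB G m b) = rB G (dM m) b + rB G m (dB b)"
  using phi_balanced_M[of 1 m b, THEN arg_cong, of g12]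
  by (simp add: jprod_def gmul_def phi_parts_simps algebra_simps)

lemma flipM_rB: "flipM (rB G m b) = lB G b (flipM m)"
  using phi_balanced_M[of 1 m b, THEN arg_cong, of g21]
  by (simp add: jprod_def gmul_def phi_parts_simps algebra_simps)

lemma flipN_rA: "flipN (rA G n a) = lA G a (flipN n)"
  using phi_balanced_N[of 1 n a, THEN arg_cong, of g12]
  by (simp add: jprod_def gmul_def phi_parts_simps algebra_simps)

lemma dN_rA: "dN (rA G n a) = rA G (dN n) a + rA G n (dA a)"
  using phi_balanced_N[of 1 n a, THEN arg_cong, of g21]
  by (simp add: jprod_def gmul_def phi_parts_simps algebra_simps)

lemma flipN_lB: "flipN (lB G b n) = rB G (flipN n) b"
  using phi_balanced_N[of b n 1, THEN arg_cong, of g12]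
  by (simp add: jprod_def gmul_def phi_parts_simps algebra_simps)

lemma dN_lB: "dN (lB G b n) = lB G (dB b) n + lB G b (dN n)"
  using phi_balanced_N[of b n 1, THEN arg_cong, of g21]
  by (simp add: jprod_def gmul_def phi_parts_simps lB_cB_commute algebra_simps)

lemma phi_block_add:
  "phi (GM (a + a') 0 0 0) = phi (GM a 0 0 0) + phi (GM a' 0 0 0)"
  "phi (GM 0 (m + m') 0 0) = phi (GM 0 m 0 0) + phi (GM 0 m' 0 0)"
  "phi (GM 0 0 (n + n') 0) = phi (GM 0 0 n 0) + phi (GM 0 0 n' 0)"
  "phi (GM 0 0 0 (b + b')) = phi (GM 0 0 0 b) + phi (GM 0 0 0 b')"
  by (simp_all add: GM_add flip: phi_add)

lemma additive_phi_parts: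
  "additive dA" "additive dB" "additive dM" "additive dN" "additive flipM" "additive flipN"
  by (simp_all add: additive_def dA_def dB_def dM_def dN_def flipM_def flipN_def phi_block_add
      algebra_simps)

lemmas phi_parts_add[simp] = additive_phi_parts[THEN additive.add]
lemmas phi_parts_zero[simp] = additive_phi_parts[THEN additive.zero]
lemmas phi_parts_minus[simp] = additive_phi_parts[THEN additive.minus]

lemma dA_one[simp]: "dA 1 = 0"
  by (simp add: dA_def cA_def)

lemma dB_one[simp]: "dB 1 = 0"
  by (simp add: dB_def cB_def)

lemma phi_gI: "phi gI = GM cA 0 0 cB"
proof -
  have "phi gI = phi (GM 1 0 0 0) + phi (GM 0 0 0 1)"
    by (simp add: gI_def GM_add flip: phi_add)
  then show ?thesis by (simp add: gm_eq_iff cA_def cB_def)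
qed

lemma T_phi_eq: "T_phi = GM 0 m0 n0 0"
  by (simp add: T_phi_def gP1_def gP2_def gm_eq_iff gmul_def)

lemma varphi_GM: "varphi (GM a m n b) = GM (dA a) (dM m + flipN n) (flipM m + dN n) (dB b)"
proof -
  have "phi (GM a m n b)
      = phi (GM a 0 0 0) + phi (GM 0 m 0 0) + phi (GM 0 0 n 0) + phi (GM 0 0 0 b)"
    by (simp add: GM_add flip: phi_add)
  then show ?thesis
    by (simp add: varphi_def phi_gI T_phi_eq gcomm_def gmul_def gm_eq_iff phi_parts_simps
        algebra_simps)
qed

lemma dA_mult: "dA (a * a') = dA a * a' + a * dA a'"
proof -
  have "lA G (dA (a * a') - (dA a * a' + a * dA a')) m = 0" for m
    using dM_lA[of "a * a'" m] by (simp add: dM_lA algebra_simps)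
  then have "dA (a * a') - (dA a * a' + a * dA a') = 0" by (rule faithful_left)
  then show ?thesis by simp
qed

lemma dB_mult: "dB (b * b') = dB b * b' + b * dB b'"
proof -
  have "rB G m (dB (b * b') - (dB b * b' + b * dB b')) = 0" for m
    using dM_rB[of m "b * b'"] by (simp add: dM_rB algebra_simps)
  then have "dB (b * b') - (dB b * b' + b * dB b') = 0" by (rule faithful_right)
  then show ?thesis by simp
qed

lemma diag_cA_cB_central: "gmul G (GM cA 0 0 cB) X = gmul G X (GM cA 0 0 cB)"
  by (simp add: gm_eq_iff gmul_def cA_central cB_central cA_cB_intertwine_M cA_cB_intertwine_N)

lemma varphi_zero_product:
  assumes UV: "gmul G U V = 0" and VU: "gmul G V U = 0"
  shows "jprod G (varphi U) V + jprod G U (varphi V) = 0"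
proof -
  let ?C = "GM cA 0 0 cB"
  have UVX: "gmul G U (gmul G V X) = 0" "gmul G V (gmul G U X) = 0" for X
    by (simp_all add: gmul_distribs flip: gmul_assoc add: UV VU)
  have C_swap: "gmul G X (gmul G ?C Y) = gmul G ?C (gmul G X Y)" for X Y
    by (metis gmul_assoc diag_cA_cB_central)
  have central_part: "jprod G (gmul G ?C U) V + jprod G U (gmul G ?C V) = 0"
    by (simp add: jprod_def gmul_assoc C_swap UV VU UVX gmul_distribs)
  have inner_part: "jprod G (gcomm G T_phi U) V + jprod G U (gcomm G T_phi V) = 0"
    by (simp add: jprod_def gcomm_def gmul_distribs gmul_assoc UV VU UVX)
  have "jprod G (varphi U) V + jprod G U (varphi V)
      = (jprod G (phi U) V + jprod G U (phi V))
        - (jprod G (gmul G ?C U) V + jprod G U (gmul G ?C V))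
        + (jprod G (gcomm G T_phi U) V + jprod G U (gcomm G T_phi V))"
    by (simp add: varphi_def phi_gI jprod_distribs algebra_simps)
  then show ?thesis
    using zero_product[OF UV VU] central_part inner_part by simp
qed

lemma flipM_pairing: "pMN G m (flipM m) = 0" "pNM G (flipM m) m = 0"
   by (rule two_torsion_free_A, use phi_orth_MM[of m m, THEN arg_cong, of g11] in
        \<open>simp add: jprod_def gmul_def flipM_def eq_neg_iff_add_eq_0\<close>)
      (rule two_torsion_free_B, use phi_orth_MM[of m m, THEN arg_cong, of g22] in
        \<open>simp add: jprod_def gmul_def flipM_def eq_neg_iff_add_eq_0\<close>)

lemma flipN_pairing: "pMN G (flipN n) n = 0" "pNM G n (flipN n) = 0"
   by (rule two_torsion_free_A, use phi_orth_NN[of n n, THEN arg_cong, of g11] in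
        \<open>simp add: jprod_def gmul_def flipN_def eq_neg_iff_add_eq_0\<close>)
      (rule two_torsion_free_B, use phi_orth_NN[of n n, THEN arg_cong, of g22] in
        \<open>simp add: jprod_def gmul_def flipN_def eq_neg_iff_add_eq_0\<close>)

lemma dA_pMN: "dA (pMN G m n) = pMN G (dM m) n + pMN G m (dN n)"
  and dB_pNM: "dB (pNM G n m) = pNM G n (dM m) + pNM G (dN n) m"
proof -
  let ?U = "GM 1 m n (pNM G n m)" and ?V = "GM (pMN G m n) (- m) (- n) 1"
  have zp: "jprod G (varphi ?U) ?V + jprod G ?U (varphi ?V) = 0"
    by (rule varphi_zero_product) (simp_all add: gm_eq_iff gmul_def)
  have "dA (pMN G m n) - (pMN G (dM m) n + pMN G m (dN n)) = 0"
    by (rule two_torsion_free_A) (use zp[THEN arg_cong, of g11] in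
      \<open>simp add: jprod_def gmul_def varphi_GM flipM_pairing flipN_pairing algebra_simps\<close>)
  then show "dA (pMN G m n) = pMN G (dM m) n + pMN G m (dN n)" by simp
  have "dB (pNM G n m) - (pNM G n (dM m) + pNM G (dN n) m) = 0"
    by (rule two_torsion_free_B) (use zp[THEN arg_cong, of g22] in
      \<open>simp add: jprod_def gmul_def varphi_GM flipM_pairing flipN_pairing algebra_simps\<close>)
  then show "dB (pNM G n m) = pNM G n (dM m) + pNM G (dN n) m" by simp
qed

lemmas varphi_block_simps =
  jordan_derivation_at_def jprod_def gmul_def GM_add varphi_GM gm_eq_iff algebra_simps

lemma varphi_jordan_A_M: "jordan_derivation_at G varphi (GM a 0 0 0) (GM 0 m 0 0)"
  by (simp add: varphi_block_simps dM_lA flipM_lA)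

lemma varphi_jordan_B_N: "jordan_derivation_at G varphi (GM 0 0 0 b) (GM 0 0 n 0)"
  by (simp add: varphi_block_simps dN_lB flipN_lB)

lemma varphi_jordan_A_N: "jordan_derivation_at G varphi (GM a 0 0 0) (GM 0 0 n 0)"
  by (simp add: varphi_block_simps dN_rA flipN_rA)

lemma varphi_jordan_B_M: "jordan_derivation_at G varphi (GM 0 0 0 b) (GM 0 m 0 0)"
  by (simp add: varphi_block_simps dM_rB flipM_rB)

lemma varphi_jordan_A_A: "jordan_derivation_at G varphi (GM a 0 0 0) (GM a' 0 0 0)"
  by (simp add: varphi_block_simps dA_mult)

lemma varphi_jordan_B_B: "jordan_derivation_at G varphi (GM 0 0 0 b) (GM 0 0 0 b')"
  by (simp add: varphi_block_simps dB_mult)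

lemma varphi_jordan_M_N: "jordan_derivation_at G varphi (GM 0 m 0 0) (GM 0 0 n 0)"
  by (simp add: varphi_block_simps dA_pMN dB_pNM)

lemma varphi_jordan_N_M: "jordan_derivation_at G varphi (GM 0 0 n 0) (GM 0 m 0 0)"
  by (simp add: varphi_block_simps dA_pMN dB_pNM)

end

theorem lemma2p6:
  fixes G :: "('a::ring_1, 'b::ring_1, 'm::ab_group_add, 'n::ab_group_add) gmr_ops"
    and phi :: "('a, 'm, 'n, 'b) gm \<Rightarrow> ('a, 'm, 'n, 'b) gm"
    and T :: "('a, 'm, 'n, 'b) gm"
    and vphi :: "('a, 'm, 'n, 'b) gm \<Rightarrow> ('a, 'm, 'n, 'b) gm"
  assumes gmr: "gen_matrix_ring G"
    and faithful: "faithful_M G"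
    and torA: "two_torsion_free TYPE('a)"
    and torB: "two_torsion_free TYPE('b)"
    and additive: "\<forall>X Y. phi (X + Y) = phi X + phi Y"
    and zp: "\<forall>U V. gmul G U V = 0 \<and> gmul G V U = 0 \<longrightarrow>
                 jprod G (phi U) V + jprod G U (phi V) = 0"
    and T_def: "T = gmul G (gmul G gP1 (phi gP1)) gP2 + gmul G (gmul G gP2 (phi gP2)) gP1"
    and vphi_def: "\<forall>U. vphi U = phi U - gmul G (phi gI) U + gcomm G T U"
  shows
   "(\<forall>U\<in>corner G gP1 gP1. \<forall>V\<in>corner G gP1 gP2.
       vphi (jprod G U V) = jprod G (vphi U) V + jprod G U (vphi V)) \<and>
    (\<forall>U\<in>corner G gP2 gP2. \<forall>V\<in>corner G gP2 gP1.
       vphi (jprod G U V) = jprod G (vphi U) V + jprod G U (vphi V)) \<and>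
    (\<forall>U\<in>corner G gP1 gP1. \<forall>V\<in>corner G gP2 gP1.
       vphi (jprod G U V) = jprod G (vphi U) V + jprod G U (vphi V)) \<and>
    (\<forall>U\<in>corner G gP2 gP2. \<forall>V\<in>corner G gP1 gP2.
       vphi (jprod G U V) = jprod G (vphi U) V + jprod G U (vphi V)) \<and>
    (\<forall>U\<in>corner G gP1 gP1. \<forall>V\<in>corner G gP1 gP1.
       vphi (jprod G U V) = jprod G (vphi U) V + jprod G U (vphi V)) \<and>
    (\<forall>U\<in>corner G gP2 gP2. \<forall>V\<in>corner G gP2 gP2.
       vphi (jprod G U V) = jprod G (vphi U) V + jprod G U (vphi V)) \<and>
    (\<forall>U\<in>corner G gP1 gP2. \<forall>V\<in>corner G gP2 gP1.
       vphi (jprod G U V) = jprod G (vphi U) V + jprod G U (vphi V)) \<and>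
    (\<forall>U\<in>corner G gP2 gP1. \<forall>V\<in>corner G gP1 gP2.
       vphi (jprod G U V) = jprod G (vphi U) V + jprod G U (vphi V))"
proof -
  interpret zero_product_jordan_map G phi
    using gmr faithful torA torB additive zp
    unfolding faithful_M_def two_torsion_free_def additive_def
    by unfold_locales blast+
  have "vphi = varphi"
    using vphi_def T_def by (simp add: fun_eq_iff varphi_def T_phi_def)
  then show ?thesis
    using varphi_jordan_A_M varphi_jordan_B_N varphi_jordan_A_N varphi_jordan_B_M
      varphi_jordan_A_A varphi_jordan_B_B varphi_jordan_M_N varphi_jordan_N_M
    unfolding corner_blocks jordan_derivation_at_def by auto
qed

end
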